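(* Let ${\mathbb K}$ be a field, $n\geqslant 2$ and $N$ a positive integer. Let $L$ be a set of lines of $\mathrm{AG}_n({\mathbb K})$, let $D\subseteq\mathrm{PG}_{n-1}({\mathbb K})$ be the set of directions of the lines of $L$, and let $S$ be a set of points of $\mathrm{AG}_n({\mathbb K})$ such that every line of $L$ is incident with at least $N$ points of $S$. If $D$ contains an $N^{n-1}$ grid then, for any positive integer $r$, $$\binom{2r+n-2}{n}|S|\geqslant\binom{rN+n-1}{n}.$$
   Context: The direction of an affine line $\{u+\lambda v:\lambda\in{\mathbb K}\}$ is the point $\langle v\rangle$ of $\mathrm{PG}_{n-1}({\mathbb K})$. An $N^{n-1}$ grid in $\mathrm{PG}_{n-1}({\mathbb K})$ is a point set which, with respect to a suitable basis, has the form $\{\langle(a_1,\ldots,a_{n-1},1)\rangle : a_i\in A_i\}$, where each $A_i\subseteq{\mathbb K}$ has size $N$. *)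

theory Defs
  imports "HOL-Analysis.Analysis"
begin

text \<open>Points of AG_n(K) are vectors of type 'k^'n, with n = CARD('n).\<close>

definition affine_line :: "('k::field ^ 'n) set \<Rightarrow> bool" where
  "affine_line l \<longleftrightarrow> (\<exists>u v. v \<noteq> 0 \<and> l = {u + c *s v | c. True})"

text \<open>The projective point spanned by a vector v (the 1-dim subspace).\<close>
definition proj_pt :: "'k::field ^ 'n \<Rightarrow> ('k ^ 'n) set" where
  "proj_pt v = {c *s v | c. True}"

text \<open>Direction of a line: the subspace of differences of its points, i.e. proj_pt v
  for the line {u + c v}.\<close>
definition direction :: "('k::field ^ 'n) set \<Rightarrow> ('k ^ 'n) set" where
  "direction l = {x - y | x y. x \<in> l \<and> y \<in> l}"

text \<open>An N^(n-1) grid with respect to the basis given by the columns of an invertible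
  matrix M, the coordinate i0 playing the role of the last coordinate.\<close>
definition is_grid :: "nat \<Rightarrow> ('k::field ^ 'n) set set \<Rightarrow> bool" where
  "is_grid N G \<longleftrightarrow> (\<exists>(M::'k^'n^'n) (i0::'n) (A::'n \<Rightarrow> 'k set).
      invertible M \<and> (\<forall>i. i \<noteq> i0 \<longrightarrow> finite (A i) \<and> card (A i) = N) \<and>
      G = {proj_pt (M *v x) | x. x $ i0 = 1 \<and> (\<forall>i. i \<noteq> i0 \<longrightarrow> x $ i \<in> A i)})"

end

theory Submission
  imports Defs "HOL-Computational_Algebra.Polynomial" "HOL-Library.Multiset"
begin

text \<open>If the inequality failed, counting monomials against linear conditions would give a nonzero
  polynomial \<open>f\<close> of degree less than \<open>rN\<close> all of whose Hasse derivatives of order at most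
  \<open>2r - 2\<close> vanish on \<open>S\<close>. For \<open>|\<gamma>| < r\<close> the derivative \<open>D\<^sup>\<gamma>f\<close> then vanishes to order at
  least \<open>r\<close> at the \<open>N\<close> points of \<open>S\<close> on a line of \<open>L\<close>, but has degree less than \<open>rN\<close>
  along it; so its restriction to the line is zero, and so is its leading coefficient, which is
  \<open>D\<^sup>\<gamma>f\<^sub>t\<^sub>o\<^sub>p\<close> evaluated at the direction of the line (\<open>f\<^sub>t\<^sub>o\<^sub>p\<close> the homogeneous part
  of top degree). Thus \<open>f\<^sub>t\<^sub>o\<^sub>p\<close> vanishes to order \<open>r\<close> on the \<open>N\<^bsup>n-1\<^esup>\<close> grid of
  directions, and a multiplicity version of the Combinatorial Nullstellensatz forces
  \<open>deg f\<^sub>t\<^sub>o\<^sub>p \<ge> rN\<close>, a contradiction.\<close>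

section \<open>Polynomials as coefficient functions\<close>

text \<open>A polynomial in the variables \<open>'n\<close> is given by its coefficient function on exponent
  vectors. Evaluation sums over the support, so it is only meaningful for finite support.\<close>

definition mpow :: "('n::finite \<Rightarrow> 'a::comm_ring_1) \<Rightarrow> ('n \<Rightarrow> nat) \<Rightarrow> 'a" where
  "mpow x \<alpha> = (\<Prod>i\<in>UNIV. x i ^ \<alpha> i)"

definition mpoly_eval :: "(('n::finite \<Rightarrow> nat) \<Rightarrow> 'a::comm_ring_1) \<Rightarrow> ('n \<Rightarrow> 'a) \<Rightarrow> 'a" where
  "mpoly_eval c x = (\<Sum>\<alpha> | c \<alpha> \<noteq> 0. c \<alpha> * mpow x \<alpha>)"

definition total_degree :: "('n::finite \<Rightarrow> nat) \<Rightarrow> nat" where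
  "total_degree \<alpha> = sum \<alpha> UNIV"

definition index_box :: "nat \<Rightarrow> ('n::finite \<Rightarrow> nat) set" where
  "index_box B = {\<alpha>. \<forall>i. \<alpha> i \<le> B}"

definition homogeneous_part :: "nat \<Rightarrow> (('n::finite \<Rightarrow> nat) \<Rightarrow> 'a::zero) \<Rightarrow> ('n \<Rightarrow> nat) \<Rightarrow> 'a" where
  "homogeneous_part D c \<alpha> = (if total_degree \<alpha> = D then c \<alpha> else 0)"

lemma finite_homogeneous_part_support:
  "finite {\<alpha>. c \<alpha> \<noteq> 0} \<Longrightarrow> finite {\<alpha>. homogeneous_part D c \<alpha> \<noteq> 0}"
  by (rule finite_subset[rotated]) (auto simp: homogeneous_part_def)

lemma total_degree_homogeneous_part_support: "homogeneous_part D c \<alpha> \<noteq> 0 \<Longrightarrow> total_degree \<alpha> = D"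
  by (simp add: homogeneous_part_def split: if_splits)

lemma index_box_eq_PiE: "index_box B = PiE UNIV (\<lambda>_. {..B})"
  unfolding index_box_def PiE_def extensional_def by auto

lemma finite_index_box [simp]: "finite (index_box B)"
  unfolding index_box_eq_PiE by (rule finite_PiE) auto

lemma total_degree_le_subset_index_box: "{\<alpha>::'n::finite \<Rightarrow> nat. total_degree \<alpha> \<le> d} \<subseteq> index_box d"
proof
  fix \<alpha> :: "'n \<Rightarrow> nat"
  assume "\<alpha> \<in> {\<alpha>. total_degree \<alpha> \<le> d}"
  then have "\<alpha> i \<le> d" for i
    using member_le_sum[of i UNIV \<alpha>] by (simp add: total_degree_def)
  then show "\<alpha> \<in> index_box d" by (simp add: index_box_def)
qed

lemma finite_total_degree_le [simp]: "finite {\<alpha>::'n::finite \<Rightarrow> nat. total_degree \<alpha> \<le> d}"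
  by (rule finite_subset[OF total_degree_le_subset_index_box finite_index_box])

lemma finite_total_degree_eq [simp]: "finite {\<alpha>::'n::finite \<Rightarrow> nat. total_degree \<alpha> = d}"
  by (rule finite_subset[OF _ finite_total_degree_le[of d]]) auto

lemma index_box_mono: "B \<le> B' \<Longrightarrow> index_box B \<subseteq> index_box B'"
  unfolding index_box_def by (blast intro: order_trans)

lemma finite_subset_index_box:
  assumes "finite (F :: ('n::finite \<Rightarrow> nat) set)"
  obtains B where "F \<subseteq> index_box B"
proof -
  have "F \<subseteq> {\<alpha>. total_degree \<alpha> \<le> Max (total_degree ` F)}"
    using assms by auto
  then show ?thesis using total_degree_le_subset_index_box by (intro that) (rule subset_trans)
qed

lemma total_degree_add: "total_degree (\<lambda>i. \<alpha> i + \<gamma> i) = total_degree \<alpha> + total_degree \<gamma>"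
  unfolding total_degree_def by (simp add: sum.distrib)

lemma total_degree_coordinate [simp]: "total_degree ((\<lambda>_. 0)(k := j)) = j"
  unfolding total_degree_def by (simp add: fun_upd_def sum.delta)

lemma mpow_zero_exponent [simp]: "mpow x (\<lambda>_. 0) = 1"
  unfolding mpow_def by simp

lemma mpoly_eval_eq_sum:
  assumes "finite F" "{\<alpha>. c \<alpha> \<noteq> 0} \<subseteq> F"
  shows "mpoly_eval c x = (\<Sum>\<alpha>\<in>F. c \<alpha> * mpow x \<alpha>)"
  unfolding mpoly_eval_def using assms by (intro sum.mono_neutral_left) auto

lemma mpoly_eval_zero [simp]: "mpoly_eval (\<lambda>_. 0) x = 0"
  unfolding mpoly_eval_def by simp

lemma mpoly_eval_cmult:
  assumes "finite {\<alpha>. c \<alpha> \<noteq> 0}"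
  shows "mpoly_eval (\<lambda>\<alpha>. a * c \<alpha>) x = a * mpoly_eval c x"
proof -
  have "mpoly_eval (\<lambda>\<alpha>. a * c \<alpha>) x = (\<Sum>\<alpha> | c \<alpha> \<noteq> 0. a * c \<alpha> * mpow x \<alpha>)"
    using assms by (intro mpoly_eval_eq_sum) auto
  then show ?thesis unfolding mpoly_eval_def by (simp add: sum_distrib_left mult.assoc)
qed

lemma coeff_nonzero_if_mpoly_eval_nonzero: "mpoly_eval c x \<noteq> 0 \<Longrightarrow> \<exists>\<alpha>. c \<alpha> \<noteq> 0"
  unfolding mpoly_eval_def by (metis (mono_tags, lifting) empty_Collect_eq sum.empty)

lemma mpow_coordinate_nonzero_imp:
  assumes "\<And>i. i \<noteq> k \<Longrightarrow> W i = 0" "mpow W \<beta> \<noteq> 0"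
  shows "\<beta> = (\<lambda>_. 0)(k := \<beta> k)"
proof
  fix i
  show "\<beta> i = ((\<lambda>_. 0)(k := \<beta> k)) i"
  proof (cases "i = k")
    case False
    have "\<beta> i = 0"
    proof (rule ccontr)
      assume "\<beta> i \<noteq> 0"
      then have "W i ^ \<beta> i = 0" using False assms(1) by (simp add: power_0_left)
      then have "mpow W \<beta> = 0" unfolding mpow_def by (intro prod_zero) auto
      then show False using assms(2) by simp
    qed
    then show ?thesis using False by simp
  qed simp
qed

lemma mpow_coordinate [simp]: "mpow ((\<lambda>_. 0)(k := 1)) ((\<lambda>_. 0)(k := j)) = 1"
  unfolding mpow_def by (intro prod.neutral) auto

section \<open>Hasse derivatives and Taylor expansion\<close>

definition mchoose :: "('n::finite \<Rightarrow> nat) \<Rightarrow> ('n \<Rightarrow> nat) \<Rightarrow> nat" where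
  "mchoose \<alpha> \<beta> = (\<Prod>i\<in>UNIV. \<alpha> i choose \<beta> i)"

text \<open>The coefficient of \<open>x\<^sup>\<alpha>\<close> in the \<open>\<gamma>\<close>-th Hasse derivative is \<open>(\<alpha>+\<gamma> choose \<gamma>) c\<^sub>\<alpha>\<^sub>+\<^sub>\<gamma>\<close>;
  unlike ordinary derivatives, these still detect multiplicities in positive characteristic.\<close>

definition hasse :: "('n::finite \<Rightarrow> nat) \<Rightarrow> (('n \<Rightarrow> nat) \<Rightarrow> 'a::comm_ring_1) \<Rightarrow> ('n \<Rightarrow> nat) \<Rightarrow> 'a" where
  "hasse \<gamma> c = (\<lambda>\<alpha>. of_nat (mchoose (\<lambda>i. \<alpha> i + \<gamma> i) \<gamma>) * c (\<lambda>i. \<alpha> i + \<gamma> i))"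

lemma mchoose_eq_0: "\<not> (\<forall>i. \<gamma> i \<le> \<alpha> i) \<Longrightarrow> mchoose \<alpha> \<gamma> = 0"
  unfolding mchoose_def by (auto simp: not_le)

lemma mchoose_self [simp]: "mchoose \<beta> \<beta> = 1"
  unfolding mchoose_def by simp

lemma mchoose_disjoint: "(\<And>i. \<beta> i = 0 \<or> \<gamma> i = 0) \<Longrightarrow> mchoose (\<lambda>i. \<beta> i + \<gamma> i) \<beta> = 1"
  unfolding mchoose_def
  by (intro prod.neutral ballI) (metis add_0 binomial_n_0 binomial_n_n add.right_neutral)

lemma finite_hasse_support:
  assumes "finite {\<alpha>. c \<alpha> \<noteq> 0}"
  shows "finite {\<alpha>. hasse \<gamma> c \<alpha> \<noteq> 0}"
proof -
  have "{\<alpha>. hasse \<gamma> c \<alpha> \<noteq> 0} \<subseteq> (\<lambda>\<alpha>. \<lambda>i. \<alpha> i + \<gamma> i) -` {\<alpha>. c \<alpha> \<noteq> 0}"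
    by (auto simp: hasse_def)
  moreover have "inj (\<lambda>\<alpha>::'a \<Rightarrow> nat. \<lambda>i. \<alpha> i + \<gamma> i)"
    by (auto simp: inj_def fun_eq_iff)
  ultimately show ?thesis using assms finite_vimageI finite_subset by blast
qed

lemma hasse_eq_0_if_total_degree_gt:
  assumes "\<And>\<alpha>. c \<alpha> \<noteq> 0 \<Longrightarrow> total_degree \<alpha> \<le> D" "total_degree \<delta> > D"
  shows "hasse \<delta> c = (\<lambda>_. 0)"
proof
  fix \<alpha>
  have "total_degree (\<lambda>i. \<alpha> i + \<delta> i) > D" using assms(2) by (simp add: total_degree_add)
  then have "c (\<lambda>i. \<alpha> i + \<delta> i) = 0" using assms(1) not_le by blast
  then show "hasse \<delta> c \<alpha> = 0" by (simp add: hasse_def)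
qed

lemma mpoly_eval_hasse:
  assumes "finite F" "{\<alpha>. c \<alpha> \<noteq> 0} \<subseteq> F"
  shows "mpoly_eval (hasse \<gamma> c) x = (\<Sum>\<alpha>\<in>F. c \<alpha> * of_nat (mchoose \<alpha> \<gamma>) * mpow x (\<lambda>i. \<alpha> i - \<gamma> i))"
proof -
  let ?F = "{\<alpha>\<in>F. \<forall>i. \<gamma> i \<le> \<alpha> i}"
  let ?shift = "\<lambda>\<alpha>. \<lambda>i. \<alpha> i - \<gamma> i"
  have supp: "{\<alpha>. hasse \<gamma> c \<alpha> \<noteq> 0} \<subseteq> ?shift ` ?F"
  proof
    fix \<alpha> assume "\<alpha> \<in> {\<alpha>. hasse \<gamma> c \<alpha> \<noteq> 0}"
    then have "(\<lambda>i. \<alpha> i + \<gamma> i) \<in> ?F" using assms by (auto simp: hasse_def)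
    then show "\<alpha> \<in> ?shift ` ?F" by (intro image_eqI[where x="\<lambda>i. \<alpha> i + \<gamma> i"]) simp_all
  qed
  have inj: "inj_on ?shift ?F"
  proof (rule inj_onI)
    fix a b assume "a \<in> ?F" "b \<in> ?F" "?shift a = ?shift b"
    then have "a i - \<gamma> i = b i - \<gamma> i \<and> \<gamma> i \<le> a i \<and> \<gamma> i \<le> b i" for i
      by (auto dest: fun_cong[of _ _ i])
    then have "a i = b i" for i by (metis eq_diff_iff)
    then show "a = b" by (rule ext)
  qed
  have "mpoly_eval (hasse \<gamma> c) x = (\<Sum>\<alpha>\<in>?shift ` ?F. hasse \<gamma> c \<alpha> * mpow x \<alpha>)"
    using assms(1) supp by (intro mpoly_eval_eq_sum) auto
  also have "\<dots> = (\<Sum>\<alpha>\<in>?F. hasse \<gamma> c (?shift \<alpha>) * mpow x (?shift \<alpha>))"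
    by (simp add: sum.reindex[OF inj])
  also have "\<dots> = (\<Sum>\<alpha>\<in>?F. c \<alpha> * of_nat (mchoose \<alpha> \<gamma>) * mpow x (?shift \<alpha>))"
  proof (rule sum.cong[OF refl])
    fix \<alpha> assume "\<alpha> \<in> ?F"
    then have "(\<lambda>i. \<alpha> i - \<gamma> i + \<gamma> i) = \<alpha>" by auto
    then show "hasse \<gamma> c (?shift \<alpha>) * mpow x (?shift \<alpha>) =
        c \<alpha> * of_nat (mchoose \<alpha> \<gamma>) * mpow x (?shift \<alpha>)"
      unfolding hasse_def by simp
  qed
  also have "\<dots> = (\<Sum>\<alpha>\<in>F. c \<alpha> * of_nat (mchoose \<alpha> \<gamma>) * mpow x (?shift \<alpha>))"
    using assms(1) by (intro sum.mono_neutral_left) (auto simp: mchoose_eq_0)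
  finally show ?thesis .
qed

lemma mpoly_eval_hasse_top_degree:
  assumes "finite {\<alpha>. e \<alpha> \<noteq> 0}" "\<And>\<alpha>. e \<alpha> \<noteq> 0 \<Longrightarrow> total_degree \<alpha> \<le> E" "total_degree \<beta> = E"
  shows "mpoly_eval (hasse \<beta> e) x = e \<beta>"
proof -
  have "{\<alpha>. hasse \<beta> e \<alpha> \<noteq> 0} \<subseteq> {\<lambda>_. 0}"
  proof
    fix \<alpha> assume "\<alpha> \<in> {\<alpha>. hasse \<beta> e \<alpha> \<noteq> 0}"
    then have "e (\<lambda>i. \<alpha> i + \<beta> i) \<noteq> 0" by (auto simp: hasse_def)
    then have "total_degree (\<lambda>i. \<alpha> i + \<beta> i) \<le> E" by (rule assms(2))
    then have "total_degree \<alpha> = 0" using assms(3) by (simp add: total_degree_add)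
    then show "\<alpha> \<in> {\<lambda>_. 0}" by (auto simp: total_degree_def fun_eq_iff)
  qed
  then have "mpoly_eval (hasse \<beta> e) x = (\<Sum>\<alpha>\<in>{\<lambda>_. 0}. hasse \<beta> e \<alpha> * mpow x \<alpha>)"
    by (intro mpoly_eval_eq_sum) auto
  then show ?thesis by (simp add: hasse_def)
qed

lemma hasse_homogeneous_part:
  assumes "total_degree \<gamma> \<le> D"
  shows "hasse \<gamma> (homogeneous_part D c) = homogeneous_part (D - total_degree \<gamma>) (hasse \<gamma> c)"
  using assms by (auto simp: fun_eq_iff hasse_def homogeneous_part_def total_degree_add)

lemma binomial_ring_upto:
  fixes a b :: "'a::comm_ring_1"
  assumes "n \<le> B"
  shows "(a + b) ^ n = (\<Sum>k\<le>B. of_nat (n choose k) * a ^ k * b ^ (n - k))"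
  unfolding binomial_ring using assms
  by (intro sum.mono_neutral_left) (auto simp: binomial_eq_0)

lemma mpow_add:
  fixes x y :: "'n::finite \<Rightarrow> 'a::comm_ring_1"
  assumes "\<alpha> \<in> index_box B"
  shows "mpow (\<lambda>i. x i + y i) \<alpha> =
    (\<Sum>\<gamma>\<in>index_box B. of_nat (mchoose \<alpha> \<gamma>) * mpow y \<gamma> * mpow x (\<lambda>i. \<alpha> i - \<gamma> i))"
proof -
  have "mpow (\<lambda>i. x i + y i) \<alpha> = (\<Prod>i\<in>UNIV. (y i + x i) ^ \<alpha> i)"
    unfolding mpow_def by (simp add: add.commute)
  also have "\<dots> = (\<Prod>i\<in>UNIV. \<Sum>k\<le>B. of_nat (\<alpha> i choose k) * y i ^ k * x i ^ (\<alpha> i - k))"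
    using assms by (intro prod.cong refl binomial_ring_upto) (auto simp: index_box_def)
  also have "\<dots> = (\<Sum>\<gamma>\<in>PiE UNIV (\<lambda>_. {..B}).
      \<Prod>i\<in>UNIV. of_nat (\<alpha> i choose \<gamma> i) * y i ^ \<gamma> i * x i ^ (\<alpha> i - \<gamma> i))"
    by (rule prod_sum_PiE) auto
  also have "\<dots> = (\<Sum>\<gamma>\<in>index_box B. of_nat (mchoose \<alpha> \<gamma>) * mpow y \<gamma> * mpow x (\<lambda>i. \<alpha> i - \<gamma> i))"
    unfolding index_box_eq_PiE[symmetric] mchoose_def mpow_def
    by (simp add: prod.distrib of_nat_prod)
  finally show ?thesis .
qed

lemma mpoly_eval_taylor:
  fixes x y :: "'n::finite \<Rightarrow> 'a::comm_ring_1"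
  assumes "finite {\<alpha>. c \<alpha> \<noteq> 0}" "{\<alpha>. c \<alpha> \<noteq> 0} \<subseteq> index_box B"
  shows "mpoly_eval c (\<lambda>i. x i + y i) = (\<Sum>\<gamma>\<in>index_box B. mpoly_eval (hasse \<gamma> c) x * mpow y \<gamma>)"
proof -
  let ?F = "{\<alpha>. c \<alpha> \<noteq> 0}"
  have "mpoly_eval c (\<lambda>i. x i + y i) = (\<Sum>\<alpha>\<in>?F. c \<alpha> * mpow (\<lambda>i. x i + y i) \<alpha>)"
    unfolding mpoly_eval_def ..
  also have "\<dots> = (\<Sum>\<alpha>\<in>?F. c \<alpha> *
      (\<Sum>\<gamma>\<in>index_box B. of_nat (mchoose \<alpha> \<gamma>) * mpow y \<gamma> * mpow x (\<lambda>i. \<alpha> i - \<gamma> i)))"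
    using assms(2) by (intro sum.cong refl) (auto simp: mpow_add)
  also have "\<dots> = (\<Sum>\<gamma>\<in>index_box B. \<Sum>\<alpha>\<in>?F.
      c \<alpha> * of_nat (mchoose \<alpha> \<gamma>) * mpow x (\<lambda>i. \<alpha> i - \<gamma> i) * mpow y \<gamma>)"
    by (subst sum.swap) (simp add: sum_distrib_left mult_ac)
  also have "\<dots> = (\<Sum>\<gamma>\<in>index_box B. mpoly_eval (hasse \<gamma> c) x * mpow y \<gamma>)"
    by (simp add: mpoly_eval_hasse[OF assms(1) subset_refl] sum_distrib_right)
  finally show ?thesis .
qed

lemma choose_mult_choose:
  "((a + b) choose b) * ((a + b + g) choose g) = ((b + g) choose b) * ((a + b + g) choose (b + g))"
proof -
  have "((a + b + g) choose g) * ((a + b + g - g) choose b) =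
      ((a + b + g) choose (b + g)) * ((b + g) choose g)"
    using choose_mult[of g "b + g" "a + b + g"] by (simp add: mult.commute)
  moreover have "(b + g) choose g = (b + g) choose b"
    using binomial_symmetric[of b "b + g"] by simp
  ultimately show ?thesis by (metis add_diff_cancel_right' mult.commute)
qed

lemma hasse_hasse:
  fixes \<beta> \<gamma> :: "'n::finite \<Rightarrow> nat" and c :: "('n \<Rightarrow> nat) \<Rightarrow> 'a::comm_ring_1"
  shows "hasse \<beta> (hasse \<gamma> c) = (\<lambda>\<alpha>. of_nat (mchoose (\<lambda>i. \<beta> i + \<gamma> i) \<beta>) * hasse (\<lambda>i. \<beta> i + \<gamma> i) c \<alpha>)"
proof
  fix \<alpha> :: "'n \<Rightarrow> nat"
  have assoc: "(\<lambda>i. \<alpha> i + \<beta> i + \<gamma> i) = (\<lambda>i. \<alpha> i + (\<beta> i + \<gamma> i))" by (simp add: add_ac)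
  have "mchoose (\<lambda>i. \<alpha> i + \<beta> i) \<beta> * mchoose (\<lambda>i. \<alpha> i + \<beta> i + \<gamma> i) \<gamma>
      = mchoose (\<lambda>i. \<beta> i + \<gamma> i) \<beta> * mchoose (\<lambda>i. \<alpha> i + (\<beta> i + \<gamma> i)) (\<lambda>i. \<beta> i + \<gamma> i)"
    unfolding mchoose_def prod.distrib[symmetric] using choose_mult_choose by (simp add: add_ac)
  then show "hasse \<beta> (hasse \<gamma> c) \<alpha> = of_nat (mchoose (\<lambda>i. \<beta> i + \<gamma> i) \<beta>) * hasse (\<lambda>i. \<beta> i + \<gamma> i) c \<alpha>"
    unfolding hasse_def assoc[symmetric]
    by (simp add: assoc mult.assoc[symmetric] of_nat_mult[symmetric] del: of_nat_mult)
qed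

lemma mpoly_eval_hasse_hasse:
  assumes "finite {\<alpha>. c \<alpha> \<noteq> 0}"
  shows "mpoly_eval (hasse \<beta> (hasse \<gamma> c)) x =
    of_nat (mchoose (\<lambda>i. \<beta> i + \<gamma> i) \<beta>) * mpoly_eval (hasse (\<lambda>i. \<beta> i + \<gamma> i) c) x"
  unfolding hasse_hasse by (rule mpoly_eval_cmult[OF finite_hasse_support[OF assms]])

lemma mpoly_eval_hasse_hasse_disjoint:
  assumes "finite {\<alpha>. c \<alpha> \<noteq> 0}" "\<And>i. \<beta> i = 0 \<or> \<gamma> i = 0"
  shows "mpoly_eval (hasse \<beta> (hasse \<gamma> c)) x = mpoly_eval (hasse (\<lambda>i. \<beta> i + \<gamma> i) c) x"
proof -
  have "mchoose (\<lambda>i. \<beta> i + \<gamma> i) \<beta> = 1" using assms(2) by (rule mchoose_disjoint)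
  then show ?thesis by (simp add: mpoly_eval_hasse_hasse[OF assms(1)])
qed

lemma mpoly_eval_hasse_hasse_coordinate:
  assumes "finite {\<alpha>. c \<alpha> \<noteq> 0}" "\<gamma> k = 0"
  shows "mpoly_eval (hasse \<gamma> (hasse ((\<lambda>_. 0)(k := j)) c)) x = mpoly_eval (hasse (\<gamma>(k := j)) c) x"
    and "mpoly_eval (hasse ((\<lambda>_. 0)(k := j)) (hasse \<gamma> c)) x = mpoly_eval (hasse (\<gamma>(k := j)) c) x"
proof -
  have "(\<lambda>i. \<gamma> i + ((\<lambda>_. 0)(k := j)) i) = \<gamma>(k := j)" "(\<lambda>i. ((\<lambda>_. 0)(k := j)) i + \<gamma> i) = \<gamma>(k := j)"
    using assms(2) by (auto simp: fun_eq_iff)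
  with assms
  show "mpoly_eval (hasse \<gamma> (hasse ((\<lambda>_. 0)(k := j)) c)) x = mpoly_eval (hasse (\<gamma>(k := j)) c) x"
    and "mpoly_eval (hasse ((\<lambda>_. 0)(k := j)) (hasse \<gamma> c)) x = mpoly_eval (hasse (\<gamma>(k := j)) c) x"
    by (simp_all add: mpoly_eval_hasse_hasse_disjoint)
qed

section \<open>Restriction to a line\<close>

definition line_poly ::
  "(('n::finite \<Rightarrow> nat) \<Rightarrow> 'a::comm_ring_1) \<Rightarrow> ('n \<Rightarrow> 'a) \<Rightarrow> ('n \<Rightarrow> 'a) \<Rightarrow> 'a poly" where
  "line_poly e U W = mpoly_eval (\<lambda>\<alpha>. [:e \<alpha>:]) (\<lambda>i. [:U i, W i:])"

lemma poly_line_poly: "poly (line_poly e U W) t = mpoly_eval e (\<lambda>i. U i + t * W i)"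
proof -
  have supp: "{\<alpha>. [:e \<alpha>:] \<noteq> 0} = {\<alpha>. e \<alpha> \<noteq> 0}" by auto
  show ?thesis
    unfolding line_poly_def mpoly_eval_def supp mpow_def by (simp add: poly_sum poly_prod)
qed

lemma mpoly_eval_const_poly:
  "mpoly_eval (\<lambda>\<alpha>. [:c \<alpha>:]) (\<lambda>i. [:x i:]) = [:mpoly_eval c x:]"
proof -
  have supp: "{\<alpha>. [:c \<alpha>:] \<noteq> 0} = {\<alpha>. c \<alpha> \<noteq> 0}" by auto
  show ?thesis
    unfolding mpoly_eval_def supp mpow_def
    by (simp add: poly_const_pow prod_to_poly mult_to_poly sum_to_poly mult.commute)
qed

lemma hasse_const_poly: "hasse \<gamma> (\<lambda>\<alpha>. [:c \<alpha>:]) = (\<lambda>\<alpha>. [:hasse \<gamma> c \<alpha>:])"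
  unfolding hasse_def by (simp add: of_nat_poly mult_to_poly mult.commute)

lemma mpow_smult: "mpow (\<lambda>i. smult (W i) p) \<beta> = smult (mpow W \<beta>) (p ^ total_degree \<beta>)"
  unfolding mpow_def total_degree_def power_sum by (simp add: smult_power prod_smult)

lemma line_poly_expansion:
  assumes "finite {\<alpha>. e \<alpha> \<noteq> 0}" "{\<alpha>. e \<alpha> \<noteq> 0} \<subseteq> index_box B"
  shows "line_poly e U W = (\<Sum>\<beta>\<in>index_box B.
    smult (mpoly_eval (hasse \<beta> e) (\<lambda>i. U i + t * W i) * mpow W \<beta>) ([:-t, 1:] ^ total_degree \<beta>))"
proof -
  have split: "(\<lambda>i. [:U i, W i:]) = (\<lambda>i. [:U i + t * W i:] + smult (W i) [:-t, 1:])"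
    by (auto simp: fun_eq_iff)
  have "line_poly e U W = (\<Sum>\<beta>\<in>index_box B.
      mpoly_eval (hasse \<beta> (\<lambda>\<alpha>. [:e \<alpha>:])) (\<lambda>i. [:U i + t * W i:]) *
      mpow (\<lambda>i. smult (W i) [:-t, 1:]) \<beta>)"
    unfolding line_poly_def split by (rule mpoly_eval_taylor) (use assms in auto)
  then show ?thesis
    unfolding hasse_const_poly mpow_smult
    by (simp add: mpoly_eval_const_poly mult.commute)
qed

lemma coeff_line_poly:
  assumes "finite {\<alpha>. e \<alpha> \<noteq> 0}"
  shows "coeff (line_poly e U W) j = (\<Sum>\<beta> | total_degree \<beta> = j. mpoly_eval (hasse \<beta> e) U * mpow W \<beta>)"
proof -
  obtain B0 where B0: "{\<alpha>. e \<alpha> \<noteq> 0} \<subseteq> index_box B0"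
    using finite_subset_index_box[OF assms] .
  define B where "B = max B0 j"
  have supp: "{\<alpha>. e \<alpha> \<noteq> 0} \<subseteq> index_box B"
    using B0 index_box_mono[of B0 B] by (auto simp: B_def)
  have deg: "{\<beta>. total_degree \<beta> = j} \<subseteq> index_box B"
    using total_degree_le_subset_index_box[of j] index_box_mono[of j B] by (auto simp: B_def)
  have "line_poly e U W =
      (\<Sum>\<beta>\<in>index_box B. monom (mpoly_eval (hasse \<beta> e) U * mpow W \<beta>) (total_degree \<beta>))"
    using line_poly_expansion[OF assms supp, of U W 0] by (simp add: monom_altdef)
  then have "coeff (line_poly e U W) j =
      (\<Sum>\<beta>\<in>{\<beta>\<in>index_box B. total_degree \<beta> = j}. mpoly_eval (hasse \<beta> e) U * mpow W \<beta>)"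
    by (simp add: coeff_sum coeff_monom sum.inter_filter[symmetric])
  also have "{\<beta>\<in>index_box B. total_degree \<beta> = j} = {\<beta>. total_degree \<beta> = j}"
    using deg by auto
  finally show ?thesis .
qed

lemma degree_line_poly_le:
  assumes "finite {\<alpha>. e \<alpha> \<noteq> 0}" "\<And>\<alpha>. e \<alpha> \<noteq> 0 \<Longrightarrow> total_degree \<alpha> \<le> E"
  shows "degree (line_poly e U W) \<le> E"
proof (rule degree_le, intro allI impI)
  fix j assume "E < j"
  then have "hasse \<beta> e = (\<lambda>_. 0)" if "total_degree \<beta> = j" for \<beta>
    using hasse_eq_0_if_total_degree_gt[of e E \<beta>] assms(2) that \<open>E < j\<close> by simp
  then show "coeff (line_poly e U W) j = 0" by (simp add: coeff_line_poly[OF assms(1)])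
qed

lemma coeff_line_poly_top_degree:
  assumes "finite {\<alpha>. e \<alpha> \<noteq> 0}" "\<And>\<alpha>. e \<alpha> \<noteq> 0 \<Longrightarrow> total_degree \<alpha> \<le> E"
  shows "coeff (line_poly e U W) E = mpoly_eval (homogeneous_part E e) W"
proof -
  have "mpoly_eval (homogeneous_part E e) W =
      (\<Sum>\<beta> | total_degree \<beta> = E. homogeneous_part E e \<beta> * mpow W \<beta>)"
    by (rule mpoly_eval_eq_sum) (auto simp: homogeneous_part_def split: if_splits)
  also have "\<dots> = (\<Sum>\<beta> | total_degree \<beta> = E. mpoly_eval (hasse \<beta> e) U * mpow W \<beta>)"
    by (intro sum.cong) (auto simp: homogeneous_part_def mpoly_eval_hasse_top_degree[OF assms])
  finally show ?thesis by (simp add: coeff_line_poly[OF assms(1)])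
qed

lemma poly_eq_0_if_many_multiple_roots:
  fixes p :: "'a::idom poly"
  assumes "finite T" "N \<le> card T" "\<And>t. t \<in> T \<Longrightarrow> [:-t, 1:] ^ \<mu> dvd p" "degree p < \<mu> * N"
  shows "p = 0"
proof (rule ccontr)
  assume nz: "p \<noteq> 0"
  have ord: "\<mu> \<le> order t p" if "t \<in> T" for t
    using assms(3)[OF that] nz order_divides by blast
  have "\<mu> > 0" using assms(4) by (cases \<mu>) auto
  then have roots: "T \<subseteq> {x. poly p x = 0}"
    using ord nz order_root by fastforce
  have "\<mu> * N \<le> (\<Sum>t\<in>T. \<mu>)" using assms(2) by simp
  also have "\<dots> \<le> (\<Sum>t\<in>T. order t p)" using ord by (intro sum_mono) auto
  also have "\<dots> \<le> (\<Sum>x | poly p x = 0. order x p)"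
    using roots poly_roots_finite[OF nz] by (intro sum_mono2) auto
  also have "\<dots> \<le> degree p" by (rule sum_order_le_degree[OF nz])
  finally show False using assms(4) by linarith
qed

lemma line_poly_root_power_dvd:
  assumes "finite {\<alpha>. e \<alpha> \<noteq> 0}"
    and "\<And>\<beta>. total_degree \<beta> < \<mu> \<Longrightarrow> mpow W \<beta> \<noteq> 0 \<Longrightarrow>
      mpoly_eval (hasse \<beta> e) (\<lambda>i. U i + t * W i) = 0"
  shows "[:-t, 1:] ^ \<mu> dvd line_poly e U W"
proof -
  obtain B where B: "{\<alpha>. e \<alpha> \<noteq> 0} \<subseteq> index_box B"
    using finite_subset_index_box[OF assms(1)] .
  show ?thesis unfolding line_poly_expansion[OF assms(1) B, of U W t]
  proof (rule dvd_sum)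
    fix \<beta> :: "'a \<Rightarrow> nat"
    show "[:-t, 1:] ^ \<mu> dvd
      smult (mpoly_eval (hasse \<beta> e) (\<lambda>i. U i + t * W i) * mpow W \<beta>) ([:-t, 1:] ^ total_degree \<beta>)"
    proof (cases "total_degree \<beta> < \<mu>")
      case True
      then have "mpoly_eval (hasse \<beta> e) (\<lambda>i. U i + t * W i) * mpow W \<beta> = 0"
        using assms(2) by (cases "mpow W \<beta> = 0") auto
      then show ?thesis by simp
    next
      case False
      then have "[:-t, 1:] ^ \<mu> dvd [:-t, 1:] ^ total_degree \<beta>" by (intro le_imp_power_dvd) auto
      then show ?thesis by (rule dvd_smult)
    qed
  qed
qed

lemma line_poly_eq_0:
  fixes e :: "('n::finite \<Rightarrow> nat) \<Rightarrow> 'a::idom"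
  assumes "finite {\<alpha>. e \<alpha> \<noteq> 0}" "finite T" "N \<le> card T"
    and "\<And>t \<beta>. t \<in> T \<Longrightarrow> total_degree \<beta> < \<mu> \<Longrightarrow> mpow W \<beta> \<noteq> 0 \<Longrightarrow>
      mpoly_eval (hasse \<beta> e) (\<lambda>i. U i + t * W i) = 0"
    and "degree (line_poly e U W) < \<mu> * N"
  shows "line_poly e U W = 0"
  using assms by (intro poly_eq_0_if_many_multiple_roots[of T N \<mu>] line_poly_root_power_dvd) auto

lemma coeff_line_poly_coordinate:
  assumes "finite {\<alpha>. e \<alpha> \<noteq> 0}"
  shows "coeff (line_poly e U ((\<lambda>_. 0)(k := 1))) j = mpoly_eval (hasse ((\<lambda>_. 0)(k := j)) e) U"
proof -
  let ?W = "(\<lambda>_. 0)(k := 1)"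
  have "(\<Sum>\<beta> | total_degree \<beta> = j. mpoly_eval (hasse \<beta> e) U * mpow ?W \<beta>) =
      (\<Sum>\<beta>\<in>{(\<lambda>_. 0)(k := j)}. mpoly_eval (hasse \<beta> e) U * mpow ?W \<beta>)"
  proof (rule sum.mono_neutral_right)
    show "\<forall>\<beta>\<in>{\<beta>. total_degree \<beta> = j} - {(\<lambda>_. 0)(k := j)}. mpoly_eval (hasse \<beta> e) U * mpow ?W \<beta> = 0"
    proof (intro ballI)
      fix \<beta> assume \<beta>: "\<beta> \<in> {\<beta>. total_degree \<beta> = j} - {(\<lambda>_. 0)(k := j)}"
      have "mpow ?W \<beta> = 0"
      proof (rule ccontr)
        assume "mpow ?W \<beta> \<noteq> 0"
        then have eq: "\<beta> = (\<lambda>_. 0)(k := \<beta> k)" by (intro mpow_coordinate_nonzero_imp) auto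
        then have "total_degree \<beta> = total_degree ((\<lambda>_. 0)(k := \<beta> k))" by (rule arg_cong)
        then have "\<beta> k = j" using \<beta> by simp
        then show False using \<beta> eq by simp
      qed
      then show "mpoly_eval (hasse \<beta> e) U * mpow ?W \<beta> = 0" by (metis mult_zero_right)
    qed
  qed auto
  then show ?thesis by (simp add: coeff_line_poly[OF assms])
qed

lemma exists_nonzero_hasse_at_coordinate_zero:
  assumes "finite {\<alpha>. c \<alpha> \<noteq> 0}" "mpoly_eval (hasse \<gamma> c) x \<noteq> 0"
  shows "\<exists>j. mpoly_eval (hasse (\<gamma>(k := j)) c) (x(k := 0)) \<noteq> 0"
proof -
  let ?p = "line_poly (hasse \<gamma> c) (x(k := 0)) ((\<lambda>_. 0)(k := 1))"
  define j where "j = degree ?p"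
  have fin: "finite {\<alpha>. hasse \<gamma> c \<alpha> \<noteq> 0}" by (rule finite_hasse_support[OF assms(1)])
  have "(\<lambda>i. (x(k := 0)) i + x k * ((\<lambda>_. 0)(k := 1)) i) = x" by (auto simp: fun_eq_iff)
  then have "poly ?p (x k) \<noteq> 0" using assms(2) by (simp add: poly_line_poly)
  then have "coeff ?p j \<noteq> 0" unfolding j_def by (intro leading_coeff_neq_0) auto
  then have "mpoly_eval (hasse ((\<lambda>_. 0)(k := j)) (hasse \<gamma> c)) (x(k := 0)) \<noteq> 0"
    by (simp add: coeff_line_poly_coordinate[OF fin])
  moreover have "(\<lambda>i. ((\<lambda>_. 0)(k := j)) i + \<gamma> i) = \<gamma>(k := j + \<gamma> k)"
    by (auto simp: fun_eq_iff)
  ultimately have "mpoly_eval (hasse (\<gamma>(k := j + \<gamma> k)) c) (x(k := 0)) \<noteq> 0"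
    by (metis mpoly_eval_hasse_hasse[OF assms(1)] mult_zero_right)
  then show ?thesis by blast
qed

lemma hasse_coordinate_vanishing:
  fixes c :: "('n::finite \<Rightarrow> nat) \<Rightarrow> 'k::idom"
  assumes "finite {\<alpha>. c \<alpha> \<noteq> 0}" "finite T" "N \<le> card T" "x k = 0" "\<gamma> k = 0"
    and roots: "\<And>s j. s \<in> T \<Longrightarrow> j < \<mu> \<Longrightarrow> mpoly_eval (hasse (\<gamma>(k := j)) c) (x(k := s)) = 0"
    and high: "\<And>j. t < j \<Longrightarrow> mpoly_eval (hasse (\<gamma>(k := j)) c) x = 0"
    and "t < \<mu> * N"
  shows "mpoly_eval (hasse (\<gamma>(k := t)) c) x = 0"
proof -
  let ?W = "(\<lambda>_. 0)(k := 1) :: 'n \<Rightarrow> 'k"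
  let ?p = "line_poly (hasse \<gamma> c) x ?W"
  have fin: "finite {\<alpha>. hasse \<gamma> c \<alpha> \<noteq> 0}" by (rule finite_hasse_support[OF assms(1)])
  have coeff: "coeff ?p j = mpoly_eval (hasse (\<gamma>(k := j)) c) x" for j
    by (simp add: coeff_line_poly_coordinate[OF fin]
        mpoly_eval_hasse_hasse_coordinate[where \<gamma>=\<gamma> and k=k, OF assms(1,5)])
  have "degree ?p \<le> t" by (rule degree_le) (simp add: coeff high)
  have "?p = 0"
  proof (rule line_poly_eq_0[OF fin assms(2,3)])
    fix s \<beta> assume s: "s \<in> T" and \<beta>: "total_degree \<beta> < \<mu>" "mpow ?W \<beta> \<noteq> 0"
    have eq: "\<beta> = (\<lambda>_. 0)(k := \<beta> k)" using \<beta>(2) by (intro mpow_coordinate_nonzero_imp) auto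
    then have "total_degree \<beta> = total_degree ((\<lambda>_. 0)(k := \<beta> k))" by (rule arg_cong)
    then have "\<beta> k < \<mu>" using \<beta>(1) by simp
    moreover have "(\<lambda>i. x i + s * ?W i) = x(k := s)" using assms(4) by (auto simp: fun_eq_iff)
    ultimately show "mpoly_eval (hasse \<beta> (hasse \<gamma> c)) (\<lambda>i. x i + s * ?W i) = 0"
      using roots[OF s] eq mpoly_eval_hasse_hasse_coordinate(2)[where \<gamma>=\<gamma> and k=k, OF assms(1,5)]
      by metis
  next
    show "degree ?p < \<mu> * N" using \<open>degree ?p \<le> t\<close> assms(8) by linarith
  qed
  then show ?thesis using coeff[of t] by simp
qed

section \<open>Polynomials vanishing on a grid\<close>

text \<open>Over a finite field a polynomial may vanish at every point of a slice
  without vanishing on it identically, which is why \<open>nonzero_on_slice\<close> is phrased with Hasse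
  derivatives rather than values.\<close>

definition vanishes_on_grid ::
  "'n::finite set \<Rightarrow> ('n \<Rightarrow> 'k::comm_ring_1 set) \<Rightarrow> ('n \<Rightarrow> 'k) \<Rightarrow> nat \<Rightarrow> (('n \<Rightarrow> nat) \<Rightarrow> 'k) \<Rightarrow> bool"
  where "vanishes_on_grid I A z r c \<longleftrightarrow>
    (\<forall>x \<gamma>. (\<forall>i\<in>I. x i \<in> A i) \<longrightarrow> (\<forall>i. i \<notin> I \<longrightarrow> x i = z i) \<longrightarrow>
      (\<forall>i. i \<notin> I \<longrightarrow> \<gamma> i = 0) \<longrightarrow> sum \<gamma> I < r \<longrightarrow> mpoly_eval (hasse \<gamma> c) x = 0)"

definition nonzero_on_slice :: "'n::finite set \<Rightarrow> ('n \<Rightarrow> 'k::comm_ring_1) \<Rightarrow> (('n \<Rightarrow> nat) \<Rightarrow> 'k) \<Rightarrow> bool"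
  where "nonzero_on_slice I z c \<longleftrightarrow>
    (\<exists>x \<gamma>. (\<forall>i. i \<notin> I \<longrightarrow> x i = z i) \<and> (\<forall>i. i \<notin> I \<longrightarrow> \<gamma> i = 0) \<and> mpoly_eval (hasse \<gamma> c) x \<noteq> 0)"

lemma nonzero_on_slice_imp_coeff_nonzero:
  assumes "nonzero_on_slice I z c"
  obtains \<alpha> \<gamma> where "c (\<lambda>i. \<alpha> i + \<gamma> i) \<noteq> 0" "\<forall>i. i \<notin> I \<longrightarrow> \<gamma> i = 0"
proof -
  obtain x \<gamma> where "\<forall>i. i \<notin> I \<longrightarrow> \<gamma> i = 0" "mpoly_eval (hasse \<gamma> c) x \<noteq> 0"
    using assms unfolding nonzero_on_slice_def by blast
  moreover from this(2) obtain \<alpha> where "hasse \<gamma> c \<alpha> \<noteq> 0"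
    using coeff_nonzero_if_mpoly_eval_nonzero by blast
  then have "c (\<lambda>i. \<alpha> i + \<gamma> i) \<noteq> 0" unfolding hasse_def by (metis mult_zero_right)
  ultimately show ?thesis using that by blast
qed

lemma nonzero_on_slice_insert:
  assumes "finite {\<alpha>. c \<alpha> \<noteq> 0}" "nonzero_on_slice (insert k I) z c"
  shows "\<exists>j. nonzero_on_slice I (z(k := 0)) (hasse ((\<lambda>_. 0)(k := j)) c)"
proof -
  obtain x \<gamma> where x: "\<forall>i. i \<notin> insert k I \<longrightarrow> x i = z i" and \<gamma>: "\<forall>i. i \<notin> insert k I \<longrightarrow> \<gamma> i = 0"
    and nz: "mpoly_eval (hasse \<gamma> c) x \<noteq> 0"
    using assms(2) unfolding nonzero_on_slice_def by blast
  obtain j where "mpoly_eval (hasse (\<gamma>(k := j)) c) (x(k := 0)) \<noteq> 0"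
    using exists_nonzero_hasse_at_coordinate_zero[OF assms(1) nz] by blast
  then have "mpoly_eval (hasse (\<gamma>(k := 0)) (hasse ((\<lambda>_. 0)(k := j)) c)) (x(k := 0)) \<noteq> 0"
    by (simp add: mpoly_eval_hasse_hasse_coordinate(1)[OF assms(1)])
  moreover have "\<forall>i. i \<notin> I \<longrightarrow> (x(k := 0)) i = (z(k := 0)) i" "\<forall>i. i \<notin> I \<longrightarrow> (\<gamma>(k := 0)) i = 0"
    using x \<gamma> by auto
  ultimately show ?thesis unfolding nonzero_on_slice_def by blast
qed

lemma degree_hasse_coordinate:
  assumes "finite I" "k \<notin> I" "\<And>\<alpha>. c \<alpha> \<noteq> 0 \<Longrightarrow> sum \<alpha> (insert k I) \<le> d"
    and "hasse ((\<lambda>_. 0)(k := j)) c \<alpha> \<noteq> 0"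
  shows "j + sum \<alpha> I \<le> d"
proof -
  let ?\<beta> = "\<lambda>i. \<alpha> i + ((\<lambda>_. 0)(k := j)) i"
  have "c ?\<beta> \<noteq> 0" using assms(4) unfolding hasse_def by (metis mult_zero_right)
  then have "sum ?\<beta> (insert k I) \<le> d" by (rule assms(3))
  moreover have "sum ?\<beta> I = sum \<alpha> I" using assms(2) by (intro sum.cong) auto
  ultimately show ?thesis using assms(1,2) by simp
qed

lemma vanishes_on_grid_insert:
  fixes c :: "('n::finite \<Rightarrow> nat) \<Rightarrow> 'k::idom"
  assumes "finite {\<alpha>. c \<alpha> \<noteq> 0}" "finite I" "k \<notin> I" "finite (A k)" "N \<le> card (A k)"
    and van: "vanishes_on_grid (insert k I) A z r c"
    and top: "\<And>j. t < j \<Longrightarrow> \<not> nonzero_on_slice I (z(k := 0)) (hasse ((\<lambda>_. 0)(k := j)) c)"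
    and "r' \<le> r" "t < (r - r' + 1) * N"
  shows "vanishes_on_grid I A (z(k := 0)) r' (hasse ((\<lambda>_. 0)(k := t)) c)"
  unfolding vanishes_on_grid_def
proof (intro allI impI)
  fix x \<gamma>
  assume x: "\<forall>i\<in>I. x i \<in> A i" "\<forall>i. i \<notin> I \<longrightarrow> x i = (z(k := 0)) i"
    and \<gamma>: "\<forall>i. i \<notin> I \<longrightarrow> \<gamma> i = 0" "sum \<gamma> I < r'"
  have xk: "x k = 0" and \<gamma>k: "\<gamma> k = 0" using x \<gamma> assms(3) by auto
  have "mpoly_eval (hasse (\<gamma>(k := t)) c) x = 0"
  proof (rule hasse_coordinate_vanishing[where x=x and \<gamma>=\<gamma> and k=k, OF assms(1,4,5) xk \<gamma>k])
    fix s j assume "s \<in> A k" "j < r - sum \<gamma> I"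
    moreover have "sum (\<gamma>(k := j)) I = sum \<gamma> I" using assms(3) by (intro sum.cong) auto
    ultimately show "mpoly_eval (hasse (\<gamma>(k := j)) c) (x(k := s)) = 0"
      using van x \<gamma> assms(2,3) unfolding vanishes_on_grid_def by auto
  next
    fix j assume "t < j"
    then have "mpoly_eval (hasse \<gamma> (hasse ((\<lambda>_. 0)(k := j)) c)) x = 0"
      using top x \<gamma> unfolding nonzero_on_slice_def by blast
    then show "mpoly_eval (hasse (\<gamma>(k := j)) c) x = 0"
      by (simp add: mpoly_eval_hasse_hasse_coordinate(1)[where \<gamma>=\<gamma> and k=k, OF assms(1) \<gamma>k])
  next
    have "(r - r' + 1) * N \<le> (r - sum \<gamma> I) * N"
      using \<gamma>(2) assms(8) by (intro mult_le_mono1) linarith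
    then show "t < (r - sum \<gamma> I) * N" using assms(9) by linarith
  qed
  then show "mpoly_eval (hasse \<gamma> (hasse ((\<lambda>_. 0)(k := t)) c)) x = 0"
    by (simp add: mpoly_eval_hasse_hasse_coordinate(1)[where \<gamma>=\<gamma> and k=k, OF assms(1) \<gamma>k])
qed

text \<open>Induction on \<open>I\<close>: expand in the variable \<open>k\<close> and pass to the coefficient of the largest
  power \<open>x\<^sub>k\<^sup>t\<close> that is nonzero on the smaller slice. It vanishes on the smaller grid to order
  \<open>r - t div N\<close>, because on each line parallel to the \<open>k\<close>-th axis through the grid the
  \<open>N\<close> points of \<open>A k\<close> are roots of a polynomial of degree \<open>t\<close>.\<close>

lemma grid_degree_bound:
  fixes c :: "('n::finite \<Rightarrow> nat) \<Rightarrow> 'k::idom"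
  assumes "finite I" "\<And>i. i \<in> I \<Longrightarrow> finite (A i) \<and> card (A i) = N" "finite {\<alpha>. c \<alpha> \<noteq> 0}"
    and "\<And>\<alpha>. c \<alpha> \<noteq> 0 \<Longrightarrow> sum \<alpha> I \<le> d"
    and "vanishes_on_grid I A z r c" "nonzero_on_slice I z c"
  shows "r * N \<le> d"
  using assms
proof (induction I arbitrary: c z d r rule: finite_induct)
  case empty
  show ?case
  proof (cases "r = 0")
    case False
    from empty.prems(5) obtain x \<gamma>
      where "\<forall>i. x i = z i" "\<forall>i. \<gamma> i = 0" "mpoly_eval (hasse \<gamma> c) x \<noteq> 0"
      unfolding nonzero_on_slice_def by auto
    moreover have "mpoly_eval (hasse \<gamma> c) x = 0" if "\<forall>i. x i = z i" "\<forall>i. \<gamma> i = 0"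
      using empty.prems(4) that False unfolding vanishes_on_grid_def by simp
    ultimately show ?thesis by simp
  qed simp
next
  case (insert k I)
  define P where "P j \<longleftrightarrow> nonzero_on_slice I (z(k := 0)) (hasse ((\<lambda>_. 0)(k := j)) c)" for j
  have fin: "finite {\<alpha>. hasse ((\<lambda>_. 0)(k := j)) c \<alpha> \<noteq> 0}" for j
    by (rule finite_hasse_support[OF insert.prems(2)])
  have deg: "j + sum \<alpha> I \<le> d" if "hasse ((\<lambda>_. 0)(k := j)) c \<alpha> \<noteq> 0" for j \<alpha>
    using degree_hasse_coordinate[OF insert.hyps insert.prems(3) that] .
  have P_le: "j \<le> d" if "P j" for j
  proof -
    from that obtain \<alpha> \<gamma> where "hasse ((\<lambda>_. 0)(k := j)) c (\<lambda>i. \<alpha> i + \<gamma> i) \<noteq> 0"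
      unfolding P_def by (rule nonzero_on_slice_imp_coeff_nonzero)
    from deg[OF this] show ?thesis by linarith
  qed
  obtain t where "P t" and t_max: "\<And>j. P j \<Longrightarrow> j \<le> t"
  proof -
    obtain j0 where "P j0" using nonzero_on_slice_insert[OF insert.prems(2,5)] unfolding P_def ..
    then have "\<exists>t. P t \<and> (\<forall>j. P j \<longrightarrow> j \<le> t)"
      using P_le by (intro ex_has_greatest_nat[where b = "Suc d"]) (auto simp: less_Suc_eq_le)
    then show ?thesis using that by blast
  qed
  show ?case
  proof (cases "r * N \<le> t")
    case True
    then show ?thesis using P_le[OF \<open>P t\<close>] by linarith
  next
    case False
    then have "N > 0" by (cases N) auto
    define q where "q = t div N"
    have "q < r" using False \<open>N > 0\<close> by (simp add: q_def div_less_iff_less_mult)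
    have "q * N \<le> t" unfolding q_def by (rule div_times_less_eq_dividend)
    have "t < (r - (r - q) + 1) * N"
      using \<open>q < r\<close> \<open>N > 0\<close> by (simp add: q_def dividend_less_div_times)
    have "(r - q) * N \<le> d - t"
    proof (rule insert.IH)
      have "finite (A k)" "N \<le> card (A k)" using insert.prems(1) by auto
      moreover have "\<not> nonzero_on_slice I (z(k := 0)) (hasse ((\<lambda>_. 0)(k := j)) c)" if "t < j" for j
        using t_max[of j] that unfolding P_def by linarith
      ultimately show "vanishes_on_grid I A (z(k := 0)) (r - q) (hasse ((\<lambda>_. 0)(k := t)) c)"
        using insert.prems(4) \<open>t < (r - (r - q) + 1) * N\<close>
        by (intro vanishes_on_grid_insert[OF insert.prems(2) insert.hyps]) auto
      show "nonzero_on_slice I (z(k := 0)) (hasse ((\<lambda>_. 0)(k := t)) c)"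
        using \<open>P t\<close> unfolding P_def .
      show "\<And>i. i \<in> I \<Longrightarrow> finite (A i) \<and> card (A i) = N" using insert.prems(1) by blast
      show "sum \<alpha> I \<le> d - t" if "hasse ((\<lambda>_. 0)(k := t)) c \<alpha> \<noteq> 0" for \<alpha>
        using deg[OF that] by linarith
    qed (rule fin)
    moreover have "r * N = (r - q) * N + q * N" using \<open>q < r\<close> by (simp add: diff_mult_distrib)
    ultimately show ?thesis using \<open>q * N \<le> t\<close> P_le[OF \<open>P t\<close>] by linarith
  qed
qed

lemma total_degree_split: "total_degree \<alpha> = \<alpha> i + sum \<alpha> (UNIV - {i})"
  unfolding total_degree_def by (simp add: sum.remove)

text \<open>Take a monomial \<open>x\<^sup>\<alpha>\<close> of the support maximising the degree in the variables other than
  \<open>x\<^sub>k\<close>, and differentiate with respect to exactly those variables: since \<open>f\<close> is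
  homogeneous, only the monomial \<open>x\<^sub>k\<^bsup>\<alpha> k\<^esup>\<close> survives.\<close>

lemma homogeneous_nonzero_on_slice:
  assumes fin: "finite {\<alpha>. f \<alpha> \<noteq> 0}" and "f \<alpha>0 \<noteq> 0"
    and hom: "\<And>\<alpha>. f \<alpha> \<noteq> 0 \<Longrightarrow> total_degree \<alpha> = D"
  shows "nonzero_on_slice (UNIV - {k}) (\<lambda>_. 1) f"
proof -
  let ?I = "UNIV - {k}" and ?S = "{\<alpha>. f \<alpha> \<noteq> 0}"
  have "?S \<noteq> {}" using \<open>f \<alpha>0 \<noteq> 0\<close> by auto
  then obtain \<alpha>1 where "\<alpha>1 \<in> ?S" and Max: "Max ((\<lambda>\<alpha>. sum \<alpha> ?I) ` ?S) = sum \<alpha>1 ?I"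
    by (rule obtains_MAX[OF fin])
  have \<alpha>1_max: "sum \<alpha> ?I \<le> sum \<alpha>1 ?I" if "\<alpha> \<in> ?S" for \<alpha>
    unfolding Max[symmetric] using fin that by (intro Max_ge) auto
  define \<gamma> where "\<gamma> = \<alpha>1(k := 0)"
  define \<epsilon> where "\<epsilon> = (\<lambda>_. 0)(k := \<alpha>1 k)"
  have sum_\<gamma>: "sum \<gamma> ?I = sum \<alpha>1 ?I" unfolding \<gamma>_def by (intro sum.cong) auto
  have supp: "{\<alpha>. hasse \<gamma> f \<alpha> \<noteq> 0} \<subseteq> {\<epsilon>}"
  proof
    fix \<alpha> assume "\<alpha> \<in> {\<alpha>. hasse \<gamma> f \<alpha> \<noteq> 0}"
    then have "of_nat (mchoose (\<lambda>i. \<alpha> i + \<gamma> i) \<gamma>) * f (\<lambda>i. \<alpha> i + \<gamma> i) \<noteq> 0"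
      by (simp add: hasse_def)
    then have nz: "f (\<lambda>i. \<alpha> i + \<gamma> i) \<noteq> 0" by (metis mult_zero_right)
    have sum_add: "sum (\<lambda>i. \<alpha> i + \<gamma> i) ?I = sum \<alpha> ?I + sum \<alpha>1 ?I"
      by (simp add: sum.distrib sum_\<gamma>)
    then have "sum \<alpha> ?I = 0" using \<alpha>1_max[of "\<lambda>i. \<alpha> i + \<gamma> i"] nz by simp
    then have off: "\<alpha> i = 0" if "i \<noteq> k" for i using that by simp
    have "total_degree (\<lambda>i. \<alpha> i + \<gamma> i) = \<alpha> k + sum \<alpha>1 ?I"
      using total_degree_split[of "\<lambda>i. \<alpha> i + \<gamma> i" k] sum_add \<open>sum \<alpha> ?I = 0\<close>
      by (simp add: \<gamma>_def)
    moreover have "total_degree (\<lambda>i. \<alpha> i + \<gamma> i) = total_degree \<alpha>1"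
      using hom nz \<open>\<alpha>1 \<in> ?S\<close> by simp
    ultimately have "\<alpha> k = \<alpha>1 k" using total_degree_split[of \<alpha>1 k] by linarith
    then show "\<alpha> \<in> {\<epsilon>}" using off by (auto simp: \<epsilon>_def fun_eq_iff)
  qed
  have "(\<lambda>i. \<epsilon> i + \<gamma> i) = \<alpha>1" "(\<lambda>i. \<gamma> i + \<epsilon> i) = \<alpha>1"
    by (auto simp: \<epsilon>_def \<gamma>_def fun_eq_iff)
  moreover have "mchoose (\<lambda>i. \<gamma> i + \<epsilon> i) \<gamma> = 1"
    by (rule mchoose_disjoint) (auto simp: \<gamma>_def \<epsilon>_def)
  ultimately have "hasse \<gamma> f \<epsilon> = f \<alpha>1" by (simp add: hasse_def)
  moreover have "mpoly_eval (hasse \<gamma> f) (\<lambda>_. 1) = hasse \<gamma> f \<epsilon> * mpow (\<lambda>_. 1) \<epsilon>"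
    using mpoly_eval_eq_sum[OF _ supp] by simp
  ultimately have "mpoly_eval (hasse \<gamma> f) (\<lambda>_. 1) \<noteq> 0"
    using \<open>\<alpha>1 \<in> ?S\<close> by (simp add: mpow_def)
  moreover have "\<gamma> k = 0" by (simp add: \<gamma>_def)
  ultimately show ?thesis
    unfolding nonzero_on_slice_def by (intro exI[of _ "\<lambda>_. 1"] exI[of _ \<gamma>]) auto
qed

lemma homogeneous_grid_degree_bound:
  fixes c :: "('n::finite \<Rightarrow> nat) \<Rightarrow> 'k::idom"
  assumes "finite {\<alpha>. c \<alpha> \<noteq> 0}" "homogeneous_part D c \<alpha>0 \<noteq> 0"
    and "\<And>i. i \<noteq> k \<Longrightarrow> finite (A i) \<and> card (A i) = N"
    and "\<And>x \<gamma>. x k = 1 \<Longrightarrow> (\<And>i. i \<noteq> k \<Longrightarrow> x i \<in> A i) \<Longrightarrow> total_degree \<gamma> < r \<Longrightarrow>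
      mpoly_eval (hasse \<gamma> (homogeneous_part D c)) x = 0"
  shows "r * N \<le> D"
proof (rule grid_degree_bound[where I = "UNIV - {k}" and z = "\<lambda>_. 1"])
  let ?f = "homogeneous_part D c"
  have fin: "finite {\<alpha>. ?f \<alpha> \<noteq> 0}" by (rule finite_homogeneous_part_support[OF assms(1)])
  then show "finite {\<alpha>. ?f \<alpha> \<noteq> 0}" .
  show "sum \<alpha> (UNIV - {k}) \<le> D" if "?f \<alpha> \<noteq> 0" for \<alpha>
    using total_degree_homogeneous_part_support[OF that] total_degree_split[of \<alpha> k] by simp
  show "vanishes_on_grid (UNIV - {k}) A (\<lambda>_. 1) r ?f"
    unfolding vanishes_on_grid_def
  proof (intro allI impI)
    fix x \<gamma> :: "'n \<Rightarrow> _"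
    assume "\<forall>i\<in>UNIV - {k}. x i \<in> A i" "\<forall>i. i \<notin> UNIV - {k} \<longrightarrow> x i = 1"
      and "\<forall>i. i \<notin> UNIV - {k} \<longrightarrow> \<gamma> i = 0" "sum \<gamma> (UNIV - {k}) < r"
    moreover have "total_degree \<gamma> = \<gamma> k + sum \<gamma> (UNIV - {k})" by (rule total_degree_split)
    ultimately show "mpoly_eval (hasse \<gamma> ?f) x = 0" by (intro assms(4)) auto
  qed
  show "nonzero_on_slice (UNIV - {k}) (\<lambda>_. 1) ?f"
    using fin assms(2) total_degree_homogeneous_part_support by (rule homogeneous_nonzero_on_slice)
qed (use assms(3) in simp_all)

lemma bij_betw_count_multisets_of_size:
  "bij_betw count (multisets_of_size (UNIV :: 'n::finite set) e) {\<alpha>. total_degree \<alpha> = e}"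
proof -
  let ?A = "multisets_of_size (UNIV :: 'n set) e"
  have size: "size M = total_degree (count M)" for M :: "'n multiset"
    unfolding total_degree_def size_multiset_overloaded_eq
    by (intro sum.mono_neutral_left) (auto simp: count_eq_zero_iff)
  have "count ` ?A = {\<alpha>. total_degree \<alpha> = e}"
  proof (intro equalityI subsetI)
    fix \<alpha> assume "\<alpha> \<in> count ` ?A"
    then show "\<alpha> \<in> {\<alpha>. total_degree \<alpha> = e}" using size by (auto simp: multisets_of_size_def)
  next
    fix \<alpha> :: "'n \<Rightarrow> nat" assume "\<alpha> \<in> {\<alpha>. total_degree \<alpha> = e}"
    moreover have "count (Abs_multiset \<alpha>) = \<alpha>" by (rule count_Abs_multiset) simp
    ultimately show "\<alpha> \<in> count ` ?A"
      using size[of "Abs_multiset \<alpha>"]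
      by (intro rev_image_eqI[of "Abs_multiset \<alpha>"]) (auto simp: multisets_of_size_def)
  qed
  moreover have "inj_on count ?A" by (meson count_inject inj_onI)
  ultimately show ?thesis unfolding bij_betw_def by blast
qed

lemma card_total_degree_eq:
  "card {\<alpha>::'n::finite \<Rightarrow> nat. total_degree \<alpha> = e} = (CARD('n) + e - 1) choose e"
proof -
  have "bij_betw count (multisets_of_size (UNIV :: 'n set) e) {\<alpha>. total_degree \<alpha> = e}"
    by (rule bij_betw_count_multisets_of_size)
  then have "card (multisets_of_size (UNIV :: 'n set) e) = card {\<alpha>::'n \<Rightarrow> nat. total_degree \<alpha> = e}"
    by (rule bij_betw_same_card)
  then show ?thesis using card_multisets_of_size[of "UNIV :: 'n set" e] by simp
qed

lemma card_total_degree_le: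
  "card {\<alpha>::'n::finite \<Rightarrow> nat. total_degree \<alpha> \<le> d} = (d + CARD('n)) choose CARD('n)"
proof -
  obtain m where n: "CARD('n) = Suc m" using not0_implies_Suc[of "CARD('n)"] by auto
  have "{\<alpha>::'n \<Rightarrow> nat. total_degree \<alpha> \<le> d} = (\<Union>e\<le>d. {\<alpha>. total_degree \<alpha> = e})" by auto
  also have "card \<dots> = (\<Sum>e\<le>d. card {\<alpha>::'n \<Rightarrow> nat. total_degree \<alpha> = e})"
    by (rule card_UN_disjoint) auto
  also have "\<dots> = (\<Sum>e\<le>d. (m + e) choose e)" by (simp add: card_total_degree_eq n)
  also have "\<dots> = Suc (m + d) choose d" by (rule sum_choose_lower)
  also have "\<dots> = Suc (m + d) choose Suc m" using binomial_symmetric[of d "Suc (m + d)"] by simp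
  finally show ?thesis by (simp add: n add.commute)
qed

lemma card_total_degree_le_diff:
  "k \<le> d \<Longrightarrow> card {\<alpha>::'n::finite \<Rightarrow> nat. total_degree \<alpha> \<le> d - k} = (d + CARD('n) - k) choose CARD('n)"
  unfolding card_total_degree_le by (simp add: algebra_simps)

section \<open>Vanishing to high order on a finite set\<close>

lemma homogeneous_linear_system_nontrivial_solution:
  fixes a :: "'j \<Rightarrow> 'i \<Rightarrow> 'k::field"
  assumes "finite J" "finite I" "card J < card I"
  shows "\<exists>c. (\<exists>i\<in>I. c i \<noteq> 0) \<and> (\<forall>j\<in>J. (\<Sum>i\<in>I. a j i * c i) = 0)"
  using assms
proof (induction J arbitrary: I a rule: finite_induct)
  case empty
  then obtain i0 where "i0 \<in> I" by fastforce
  then show ?case by (intro exI[of _ "\<lambda>i. if i = i0 then 1 else 0"]) auto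
next
  case (insert j J)
  show ?case
  proof (cases "\<forall>i\<in>I. a j i = 0")
    case True
    obtain c where "\<exists>i\<in>I. c i \<noteq> 0" "\<forall>j\<in>J. (\<Sum>i\<in>I. a j i * c i) = 0"
      using insert.IH[of I a] insert.prems insert.hyps by auto
    then show ?thesis using True by (intro exI[of _ c]) auto
  next
    case False
    then obtain i0 where i0: "i0 \<in> I" "a j i0 \<noteq> 0" by blast
    define I' where "I' = I - {i0}"
    define a' where "a' = (\<lambda>j' i. a j' i - a j' i0 * a j i / a j i0)"
    have "finite I'" "card J < card I'" using insert.prems insert.hyps i0 by (simp_all add: I'_def)
    then obtain c' where c'_nz: "\<exists>i\<in>I'. c' i \<noteq> 0" and c'_sol: "\<forall>j'\<in>J. (\<Sum>i\<in>I'. a' j' i * c' i) = 0"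
      using insert.IH by blast
    define c where "c = (\<lambda>i. if i = i0 then - (\<Sum>i'\<in>I'. a j i' * c' i') / a j i0 else c' i)"
    have split: "(\<Sum>i\<in>I. f i) = f i0 + (\<Sum>i\<in>I'. f i)" for f :: "'i \<Rightarrow> 'k"
      using insert.prems i0 by (simp add: I'_def sum.remove)
    have c_I': "(\<Sum>i\<in>I'. g i * c i) = (\<Sum>i\<in>I'. g i * c' i)" for g :: "'i \<Rightarrow> 'k"
      by (intro sum.cong) (auto simp: c_def I'_def)
    have "(\<Sum>i\<in>I. a j' i * c i) = 0" if "j' \<in> insert j J" for j'
    proof (cases "j' = j")
      case True
      then show ?thesis unfolding split c_I' using i0 by (simp add: c_def)
    next
      case False
      then have "(\<Sum>i\<in>I'. a' j' i * c' i) = 0" using c'_sol that by auto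
      then have "(\<Sum>i\<in>I'. a j' i * c' i) - a j' i0 / a j i0 * (\<Sum>i\<in>I'. a j i * c' i) = 0"
        unfolding a'_def by (simp add: algebra_simps sum_subtractf sum_distrib_left)
      then show ?thesis unfolding split c_I' using i0 by (simp add: c_def field_simps)
    qed
    moreover have "\<exists>i\<in>I. c i \<noteq> 0" using c'_nz by (auto simp: c_def I'_def)
    ultimately show ?thesis by blast
  qed
qed

lemma exists_poly_vanishing_to_order:
  fixes S :: "('n::finite \<Rightarrow> 'k::field) set"
  assumes "finite S"
    and "card {\<gamma>::'n \<Rightarrow> nat. total_degree \<gamma> \<le> m} * card S < card {\<alpha>::'n \<Rightarrow> nat. total_degree \<alpha> \<le> D}"
  obtains c where "{\<alpha>. c \<alpha> \<noteq> 0} \<subseteq> {\<alpha>. total_degree \<alpha> \<le> D}" "{\<alpha>. c \<alpha> \<noteq> 0} \<noteq> {}"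
    "\<And>s \<gamma>. s \<in> S \<Longrightarrow> total_degree \<gamma> \<le> m \<Longrightarrow> mpoly_eval (hasse \<gamma> c) s = 0"
proof -
  let ?Mon = "\<lambda>d. {\<alpha>::'n \<Rightarrow> nat. total_degree \<alpha> \<le> d}"
  define a where "a = (\<lambda>(s :: 'n \<Rightarrow> 'k, \<gamma> :: 'n \<Rightarrow> nat) (\<alpha> :: 'n \<Rightarrow> nat).
    of_nat (mchoose \<alpha> \<gamma>) * mpow s (\<lambda>i. \<alpha> i - \<gamma> i))"
  have "card (S \<times> ?Mon m) < card (?Mon D)"
    using assms(2) by (simp add: card_cartesian_product mult.commute)
  then obtain c0 where c0_nz: "\<exists>\<alpha>\<in>?Mon D. c0 \<alpha> \<noteq> 0"
    and c0_sol: "\<forall>j\<in>S \<times> ?Mon m. (\<Sum>\<alpha>\<in>?Mon D. a j \<alpha> * c0 \<alpha>) = 0"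
    using homogeneous_linear_system_nontrivial_solution[of "S \<times> ?Mon m" "?Mon D" a] assms(1) by auto
  define c where "c = (\<lambda>\<alpha>. if \<alpha> \<in> ?Mon D then c0 \<alpha> else 0)"
  have supp: "{\<alpha>. c \<alpha> \<noteq> 0} \<subseteq> ?Mon D" by (auto simp: c_def)
  show ?thesis
  proof (rule that[OF supp])
    show "{\<alpha>. c \<alpha> \<noteq> 0} \<noteq> {}" using c0_nz by (auto simp: c_def)
  next
    fix s :: "'n \<Rightarrow> 'k" and \<gamma> :: "'n \<Rightarrow> nat"
    assume "s \<in> S" "total_degree \<gamma> \<le> m"
    have "mpoly_eval (hasse \<gamma> c) s =
        (\<Sum>\<alpha>\<in>?Mon D. c \<alpha> * of_nat (mchoose \<alpha> \<gamma>) * mpow s (\<lambda>i. \<alpha> i - \<gamma> i))"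
      by (rule mpoly_eval_hasse[OF finite_total_degree_le supp])
    also have "\<dots> = (\<Sum>\<alpha>\<in>?Mon D. a (s, \<gamma>) \<alpha> * c0 \<alpha>)"
      by (intro sum.cong) (auto simp: c_def a_def mult_ac)
    also have "\<dots> = 0" using c0_sol \<open>s \<in> S\<close> \<open>total_degree \<gamma> \<le> m\<close> by auto
    finally show "mpoly_eval (hasse \<gamma> c) s = 0" .
  qed
qed

lemma exists_top_homogeneous_part:
  assumes "finite {\<alpha>. c \<alpha> \<noteq> 0}" "{\<alpha>. c \<alpha> \<noteq> 0} \<noteq> {}"
  obtains D \<alpha>0 where "\<And>\<alpha>. c \<alpha> \<noteq> 0 \<Longrightarrow> total_degree \<alpha> \<le> D" "c \<alpha>0 \<noteq> 0" "total_degree \<alpha>0 = D"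
proof -
  let ?D = "Max (total_degree ` {\<alpha>. c \<alpha> \<noteq> 0})"
  have "?D \<in> total_degree ` {\<alpha>. c \<alpha> \<noteq> 0}" using assms by (intro Max_in) auto
  then obtain \<alpha>0 where "c \<alpha>0 \<noteq> 0" "total_degree \<alpha>0 = ?D" by auto
  moreover have "total_degree \<alpha> \<le> ?D" if "c \<alpha> \<noteq> 0" for \<alpha> using assms(1) that by (intro Max_ge) auto
  ultimately show ?thesis using that by blast
qed

text \<open>On a line \<open>U + tW\<close> meeting the vanishing set in \<open>N\<close> points, the Hasse derivatives of low
  order of \<open>c\<close> restrict to univariate polynomials of degree less than their number of roots
  counted with multiplicity; their leading coefficients are the Hasse derivatives of the top
  homogeneous part at \<open>W\<close>.\<close>

lemma hasse_top_part_vanishes_at_direction: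
  fixes c :: "('n::finite \<Rightarrow> nat) \<Rightarrow> 'k::idom"
  assumes fin: "finite {\<alpha>. c \<alpha> \<noteq> 0}" and deg: "\<And>\<alpha>. c \<alpha> \<noteq> 0 \<Longrightarrow> total_degree \<alpha> \<le> D"
    and van: "\<And>s \<gamma>. s \<in> S \<Longrightarrow> total_degree \<gamma> \<le> m \<Longrightarrow> mpoly_eval (hasse \<gamma> c) s = 0"
    and T: "finite T" "N \<le> card T" "\<forall>t\<in>T. (\<lambda>i. U i + t * W i) \<in> S"
    and lt: "D < r * N" and order: "r + total_degree \<gamma> \<le> m + 1"
  shows "mpoly_eval (hasse \<gamma> (homogeneous_part D c)) W = 0"
proof (cases "total_degree \<gamma> \<le> D")
  case False
  then have "hasse \<gamma> (homogeneous_part D c) = (\<lambda>_. 0)"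
    by (intro hasse_eq_0_if_total_degree_gt[where D = D])
      (auto simp: homogeneous_part_def split: if_splits)
  then show ?thesis by simp
next
  case True
  let ?e = "hasse \<gamma> c" and ?E = "D - total_degree \<gamma>"
  have fin_e: "finite {\<alpha>. ?e \<alpha> \<noteq> 0}" by (rule finite_hasse_support[OF fin])
  have deg_e: "total_degree \<alpha> \<le> ?E" if "?e \<alpha> \<noteq> 0" for \<alpha>
  proof -
    have "c (\<lambda>i. \<alpha> i + \<gamma> i) \<noteq> 0" using that unfolding hasse_def by (metis mult_zero_right)
    then show ?thesis using deg by (fastforce simp: total_degree_add)
  qed
  have "line_poly ?e U W = 0"
  proof (rule line_poly_eq_0[OF fin_e T(1,2), where \<mu> = "m + 1 - total_degree \<gamma>"])
    fix t and \<beta> :: "'n \<Rightarrow> nat" assume "t \<in> T" "total_degree \<beta> < m + 1 - total_degree \<gamma>"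
    moreover from \<open>t \<in> T\<close> have "(\<lambda>i. U i + t * W i) \<in> S" using T(3) by blast
    ultimately show "mpoly_eval (hasse \<beta> ?e) (\<lambda>i. U i + t * W i) = 0"
      by (simp add: mpoly_eval_hasse_hasse[OF fin] van total_degree_add)
  next
    have "degree (line_poly ?e U W) \<le> ?E" by (rule degree_line_poly_le[OF fin_e deg_e])
    moreover have "r * N \<le> (m + 1 - total_degree \<gamma>) * N"
      using order by (intro mult_le_mono1) linarith
    ultimately show "degree (line_poly ?e U W) < (m + 1 - total_degree \<gamma>) * N"
      using lt by linarith
  qed
  then have "coeff (line_poly ?e U W) ?E = 0" by simp
  then show ?thesis
    by (simp add: coeff_line_poly_top_degree[OF fin_e deg_e] hasse_homogeneous_part[OF True])
qed

lemma direction_line: "direction {u + c *s v | c. True} = proj_pt (v :: 'k::field ^ 'n)"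
proof (intro equalityI subsetI)
  fix w assume "w \<in> direction {u + c *s v | c. True}"
  then obtain a b where "w = (u + a *s v) - (u + b *s v)" unfolding direction_def by auto
  then have "w = (a - b) *s v" by (simp add: vec_eq_iff algebra_simps)
  then show "w \<in> proj_pt v" unfolding proj_pt_def by blast
next
  fix w assume "w \<in> proj_pt v"
  then obtain a where "w = a *s v" unfolding proj_pt_def by auto
  then have "w = (u + a *s v) - (u + 0 *s v)" by (simp add: vec_eq_iff)
  then show "w \<in> direction {u + c *s v | c. True}" unfolding direction_def by blast
qed

lemma proj_pt_eq_imp_multiple: "proj_pt v = proj_pt w \<Longrightarrow> \<exists>a. v = a *s w"
proof -
  assume "proj_pt v = proj_pt w"
  moreover have "v \<in> proj_pt v" unfolding proj_pt_def by (auto intro: exI[of _ 1])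
  ultimately show ?thesis unfolding proj_pt_def by auto
qed

lemma line_points_along_direction:
  fixes l S :: "('k::field ^ 'n) set"
  assumes "affine_line l" "direction l = proj_pt w" "finite S" "N \<le> card (l \<inter> S)"
  shows "\<exists>u T. finite T \<and> N \<le> card T \<and> (\<forall>t\<in>T. u + t *s w \<in> S)"
proof -
  obtain u v where "v \<noteq> 0" and l: "l = {u + c *s v | c. True}"
    using assms(1) unfolding affine_line_def by blast
  obtain a where v: "v = a *s w"
    using assms(2) proj_pt_eq_imp_multiple unfolding l direction_line by blast
  define f where "f t = u + t *s w" for t
  have "inj f" using \<open>v \<noteq> 0\<close> v by (auto simp: inj_def f_def)
  define T where "T = f -` S"
  have "finite T" unfolding T_def using assms(3) \<open>inj f\<close> by (rule finite_vimageI)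
  have "l \<inter> S \<subseteq> f ` T"
  proof
    fix p assume "p \<in> l \<inter> S"
    then obtain c where "p = u + c *s v" "p \<in> S" unfolding l by auto
    then show "p \<in> f ` T" unfolding T_def f_def v by (auto simp: vector_smult_assoc)
  qed
  then have "card (l \<inter> S) \<le> card (f ` T)" by (intro card_mono finite_imageI \<open>finite T\<close>)
  also have "\<dots> \<le> card T" by (rule card_image_le[OF \<open>finite T\<close>])
  finally have "N \<le> card T" using assms(4) by linarith
  moreover have "u + t *s w \<in> S" if "t \<in> T" for t using that by (simp add: T_def f_def)
  ultimately show ?thesis using \<open>finite T\<close> by blast
qed

text \<open>\<open>S'\<close> is \<open>S\<close> written in the basis given by the columns of \<open>M\<close>.\<close>

lemma lines_in_coordinates:
  fixes M :: "'k::field ^ 'n ^ 'n" and S :: "('k ^ 'n) set"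
  assumes "invertible M" "finite S" "\<forall>l\<in>L. affine_line l" "\<forall>l\<in>L. N \<le> card (l \<inter> S)"
  obtains S' :: "('n \<Rightarrow> 'k) set" where "finite S'" "card S' = card S"
    "\<And>x. proj_pt (M *v (\<chi> i. x i)) \<in> direction ` L \<Longrightarrow>
      \<exists>U T. finite T \<and> N \<le> card T \<and> (\<forall>t\<in>T. (\<lambda>i. U i + t * x i) \<in> S')"
proof -
  obtain M' where MM: "M ** M' = mat 1" "M' ** M = mat 1"
    using assms(1) unfolding invertible_def by blast
  define coords where "coords p = (\<lambda>i. (M' *v p) $ i)" for p :: "'k ^ 'n"
  have "inj coords"
  proof (rule injI)
    fix p q assume "coords p = coords q"
    then have "M' *v p = M' *v q" by (simp add: coords_def fun_eq_iff vec_eq_iff)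
    then have "M *v (M' *v p) = M *v (M' *v q)" by simp
    then show "p = q" by (simp add: matrix_vector_mul_assoc MM)
  qed
  show ?thesis
  proof (rule that[of "coords ` S"])
    show "finite (coords ` S)" using assms(2) by simp
    show "card (coords ` S) = card S"
      using \<open>inj coords\<close> by (simp add: card_image inj_on_def inj_def)
  next
    fix x assume "proj_pt (M *v (\<chi> i. x i)) \<in> direction ` L"
    then obtain l where "l \<in> L" and dir: "direction l = proj_pt (M *v (\<chi> i. x i))" by auto
    then have "affine_line l" "N \<le> card (l \<inter> S)" using assms(3,4) by auto
    obtain u T where T: "finite T" "N \<le> card T" "\<forall>t\<in>T. u + t *s (M *v (\<chi> i. x i)) \<in> S"
      using line_points_along_direction[OF \<open>affine_line l\<close> dir assms(2) \<open>N \<le> card (l \<inter> S)\<close>] by blast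
    have eq: "coords (u + t *s (M *v (\<chi> i. x i))) = (\<lambda>i. coords u i + t * x i)" for t
      by (simp add: coords_def fun_eq_iff matrix_vector_right_distrib vector_scalar_commute
          matrix_vector_mul_assoc MM)
    have "(\<lambda>i. coords u i + t * x i) \<in> coords ` S" if "t \<in> T" for t
      unfolding eq[symmetric] using T(3) that by (intro imageI) blast
    then show "\<exists>U T. finite T \<and> N \<le> card T \<and> (\<forall>t\<in>T. (\<lambda>i. U i + t * x i) \<in> coords ` S)"
      using T(1,2) by blast
  qed
qed

lemma grid_directions_in_coordinates:
  fixes S :: "('k::field ^ 'n) set"
  assumes "is_grid N G" "G \<subseteq> direction ` L"
    and "finite S" "\<forall>l\<in>L. affine_line l" "\<forall>l\<in>L. N \<le> card (l \<inter> S)"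
  obtains S' :: "('n \<Rightarrow> 'k) set" and i0 A where "finite S'" "card S' = card S"
    "\<forall>i. i \<noteq> i0 \<longrightarrow> finite (A i) \<and> card (A i) = N"
    "\<forall>x. x i0 = 1 \<and> (\<forall>i. i \<noteq> i0 \<longrightarrow> x i \<in> A i) \<longrightarrow>
      (\<exists>U T. finite T \<and> N \<le> card T \<and> (\<forall>t\<in>T. (\<lambda>i. U i + t * x i) \<in> S'))"
proof -
  from assms(1) obtain M :: "'k ^ 'n ^ 'n" and i0 A where "invertible M"
    and A: "\<forall>i. i \<noteq> i0 \<longrightarrow> finite (A i) \<and> card (A i) = N"
    and G: "G = {proj_pt (M *v x) | x. x $ i0 = 1 \<and> (\<forall>i. i \<noteq> i0 \<longrightarrow> x $ i \<in> A i)}"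
    unfolding is_grid_def by blast
  obtain S' where "finite S'" "card S' = card S"
    and lines: "\<And>x. proj_pt (M *v (\<chi> i. x i)) \<in> direction ` L \<Longrightarrow>
      \<exists>U T. finite T \<and> N \<le> card T \<and> (\<forall>t\<in>T. (\<lambda>i. U i + t * x i) \<in> S')"
    using lines_in_coordinates[OF \<open>invertible M\<close> assms(3-5)] by blast
  have grid: "proj_pt (M *v (\<chi> i. x i)) \<in> direction ` L"
    if "x i0 = 1" "\<And>i. i \<noteq> i0 \<Longrightarrow> x i \<in> A i" for x
  proof -
    have "(\<chi> i. x i) $ i0 = 1 \<and> (\<forall>i. i \<noteq> i0 \<longrightarrow> (\<chi> i. x i) $ i \<in> A i)" using that by simp
    then have "proj_pt (M *v (\<chi> i. x i)) \<in> G" unfolding G by blast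
    then show ?thesis using assms(2) by blast
  qed
  show ?thesis
  proof (rule that[OF \<open>finite S'\<close> \<open>card S' = card S\<close> A], intro allI impI)
    fix x :: "'n \<Rightarrow> 'k" assume "x i0 = 1 \<and> (\<forall>i. i \<noteq> i0 \<longrightarrow> x i \<in> A i)"
    then show "\<exists>U T. finite T \<and> N \<le> card T \<and> (\<forall>t\<in>T. (\<lambda>i. U i + t * x i) \<in> S')"
      by (intro lines grid) auto
  qed
qed

theorem theorem3p2:
  fixes L :: "('k::field ^ 'n) set set" and S :: "('k ^ 'n) set" and N r :: nat
  assumes "CARD('n) \<ge> 2" and "N > 0"
    and "\<forall>l\<in>L. affine_line l"
    and "finite S"
    and "\<forall>l\<in>L. card (l \<inter> S) \<ge> N"
    and "\<exists>G. is_grid N G \<and> G \<subseteq> direction ` L"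
    and "r > 0"
  shows "((2*r + CARD('n) - 2) choose CARD('n)) * card S \<ge> ((r*N + CARD('n) - 1) choose CARD('n))"
proof (rule ccontr)
  have "card {\<gamma>::'n \<Rightarrow> nat. total_degree \<gamma> \<le> 2 * r - 2} = (2*r + CARD('n) - 2) choose CARD('n)"
    using assms(7) by (intro card_total_degree_le_diff) linarith
  moreover have
    "card {\<alpha>::'n \<Rightarrow> nat. total_degree \<alpha> \<le> r * N - 1} = (r*N + CARD('n) - 1) choose CARD('n)"
    using assms(2,7) by (intro card_total_degree_le_diff) simp
  moreover assume "\<not> ?thesis"
  ultimately have small: "card {\<gamma>::'n \<Rightarrow> nat. total_degree \<gamma> \<le> 2 * r - 2} * card S
      < card {\<alpha>::'n \<Rightarrow> nat. total_degree \<alpha> \<le> r * N - 1}"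
    by (simp only: not_le)
  obtain G where G: "is_grid N G" "G \<subseteq> direction ` L" using assms(6) by blast
  obtain S' :: "('n \<Rightarrow> 'k) set" and i0 A where "finite S'" "card S' = card S"
    and A: "\<forall>i. i \<noteq> i0 \<longrightarrow> finite (A i) \<and> card (A i) = N"
    and lines: "\<forall>x. x i0 = 1 \<and> (\<forall>i. i \<noteq> i0 \<longrightarrow> x i \<in> A i) \<longrightarrow>
      (\<exists>U T. finite T \<and> N \<le> card T \<and> (\<forall>t\<in>T. (\<lambda>i. U i + t * x i) \<in> S'))"
    by (rule grid_directions_in_coordinates[OF G assms(4,3,5)])
  obtain c :: "('n \<Rightarrow> nat) \<Rightarrow> 'k" where supp: "{\<alpha>. c \<alpha> \<noteq> 0} \<subseteq> {\<alpha>. total_degree \<alpha> \<le> r * N - 1}"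
    and "{\<alpha>. c \<alpha> \<noteq> 0} \<noteq> {}"
    and van: "\<And>s \<gamma>. s \<in> S' \<Longrightarrow> total_degree \<gamma> \<le> 2 * r - 2 \<Longrightarrow> mpoly_eval (hasse \<gamma> c) s = 0"
    using exists_poly_vanishing_to_order[OF \<open>finite S'\<close>] small unfolding \<open>card S' = card S\<close> by blast
  have fin: "finite {\<alpha>. c \<alpha> \<noteq> 0}" using supp by (rule finite_subset) simp
  obtain D \<alpha>0 where deg: "\<And>\<alpha>. c \<alpha> \<noteq> 0 \<Longrightarrow> total_degree \<alpha> \<le> D" and "c \<alpha>0 \<noteq> 0" "total_degree \<alpha>0 = D"
    using exists_top_homogeneous_part[OF fin \<open>{\<alpha>. c \<alpha> \<noteq> 0} \<noteq> {}\<close>] by blast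
  then have "D \<le> r * N - 1" using supp by blast
  moreover have "0 < r * N" using assms(2,7) by simp
  ultimately have "D < r * N" by linarith
  have "r * N \<le> D"
  proof (rule homogeneous_grid_degree_bound[where c = c and k = i0 and A = A, OF fin])
    show "homogeneous_part D c \<alpha>0 \<noteq> 0"
      using \<open>c \<alpha>0 \<noteq> 0\<close> \<open>total_degree \<alpha>0 = D\<close> by (simp add: homogeneous_part_def)
    show "finite (A i) \<and> card (A i) = N" if "i \<noteq> i0" for i using A that by blast
    fix x :: "'n \<Rightarrow> 'k" and \<gamma> :: "'n \<Rightarrow> nat"
    assume "x i0 = 1" "\<And>i. i \<noteq> i0 \<Longrightarrow> x i \<in> A i" "total_degree \<gamma> < r"
    then obtain U T where T: "finite T" "N \<le> card T" "\<forall>t\<in>T. (\<lambda>i. U i + t * x i) \<in> S'"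
      using lines by blast
    have "r + total_degree \<gamma> \<le> 2 * r - 2 + 1" using \<open>total_degree \<gamma> < r\<close> by linarith
    from hasse_top_part_vanishes_at_direction[OF fin deg van T \<open>D < r * N\<close> this]
    show "mpoly_eval (hasse \<gamma> (homogeneous_part D c)) x = 0" .
  qed
  with \<open>D < r * N\<close> show False by simp
qed
end
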